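(* Let $f\in F$ be strongly positive. Then among the words of minimal length in the alphabet $\{x_0,x_0^{-1},x_1,x_1^{-1}\}$ representing $f$, there is one containing no occurrence of $x_1^{-1}$.
   Context: Thompson's group $F=\langle x_0,x_1,x_2,\dots\mid x_nx_k=x_kx_{n+1}\text{ for }k<n\rangle$; it is generated by $x_0,x_1$, since $x_n=x_0^{1-n}x_1x_0^{n-1}$ for $n\ge1$. An element of $F$ is strongly positive if it lies in the submonoid generated by $x_1,x_2,x_3,\dots$. *)

theory Defs
  imports Main
begin

text \<open>Letters of the infinite presentation of Thompson's group F:
  Gen n stands for x_n, Inv n for x_n^{-1}.  Words are lists of letters.\<close>
datatype letter = Gen nat | Inv nat

text \<open>Two words represent the same element of
  F = < x_0, x_1, ... | x_n x_k = x_k x_{n+1} (k < n) >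
  iff they are related by the congruence generated by free cancellation
  and the defining relations.\<close>
inductive F_eq :: "letter list \<Rightarrow> letter list \<Rightarrow> bool" where
  refl: "F_eq w w"
| sym: "F_eq u v \<Longrightarrow> F_eq v u"
| trans: "F_eq u v \<Longrightarrow> F_eq v w \<Longrightarrow> F_eq u w"
| cancel1: "F_eq (u @ [Gen n, Inv n] @ v) (u @ v)"
| cancel2: "F_eq (u @ [Inv n, Gen n] @ v) (u @ v)"
| rel: "k < n \<Longrightarrow> F_eq (u @ [Gen n, Gen k] @ v) (u @ [Gen k, Gen (Suc n)] @ v)"

definition two_gen_word :: "letter list \<Rightarrow> bool" where
  "two_gen_word w \<longleftrightarrow> set w \<subseteq> {Gen 0, Inv 0, Gen 1, Inv 1}"

text \<open>Words in the positive letters x_1, x_2, ... (the element they represent is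
  strongly positive; every strongly positive element arises this way).\<close>
definition strongly_positive_word :: "letter list \<Rightarrow> bool" where
  "strongly_positive_word p \<longleftrightarrow> (\<forall>a \<in> set p. \<exists>n \<ge> 1. a = Gen n)"

end

theory Submission
  imports Defs
begin

text \<open>
  Following Belk and Brown, F acts on forest states: rows of binary trees with a pointer, on
  which x_0 moves the pointer past one tree and x_(n+1) joins the (n+1)-st and (n+2)-nd trees
  to the right of it. The action respects the defining relations, so all words representing
  the same element act alike. A weight modelled on the Belk-Brown length formula (carets count
  1, gaps between leaves count 0, 1 or 2) vanishes on the trivial state and changes by at most 1
  under each of x_0, x_1 and their inverses; hence every word in these letters representing f
  is at least as long as the weight of the image of the trivial state under f. If f is strongly
  positive, this image is an unmarked forest to the right of the pointer, and reading its trees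
  off gives a word in x_0, x_0^-1 and x_1 that represents f and whose length is exactly that
  weight.
\<close>

section \<open>Forest states and the action of F\<close>

datatype ftree = Leaf | Node bool ftree ftree

fun leaves :: "ftree \<Rightarrow> nat" where
  "leaves Leaf = 1"
| "leaves (Node _ a b) = leaves a + leaves b"

fun carets :: "ftree \<Rightarrow> nat" where
  "carets Leaf = 0"
| "carets (Node _ a b) = Suc (carets a + carets b)"

fun marked_carets :: "ftree \<Rightarrow> nat" where
  "marked_carets Leaf = 0"
| "marked_carets (Node m a b) = of_bool m + marked_carets a + marked_carets b"

fun reduced :: "ftree \<Rightarrow> bool" where
  "reduced Leaf \<longleftrightarrow> True"
| "reduced (Node m a b) \<longleftrightarrow> reduced a \<and> reduced b \<and> \<not> (m \<and> a = Leaf \<and> b = Leaf)"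

lemma leaves_pos: "0 < leaves t"
  by (induction t) auto

text \<open>
  A tree is paired with the mark of the gap to its right. Splitting a leaf creates a marked
  gap, and joining two leaves across a marked gap undoes that split; any other join keeps the
  mark in the new node.
\<close>

fun join_trees :: "ftree \<times> bool \<Rightarrow> ftree \<times> bool \<Rightarrow> ftree \<times> bool" where
  "join_trees (a, m) (b, m') =
     (if m \<and> a = Leaf \<and> b = Leaf then (Leaf, m') else (Node m a b, m'))"

fun split_tree :: "ftree \<times> bool \<Rightarrow> (ftree \<times> bool) \<times> (ftree \<times> bool)" where
  "split_tree (Leaf, m) = ((Leaf, True), (Leaf, m))"
| "split_tree (Node m' a b, m) = ((a, m'), (b, m))"

lemma split_tree_join_trees: "split_tree (join_trees x y) = (x, y)"
  by (cases x; cases y; cases "fst x") auto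

lemma join_trees_split_tree: "reduced (fst x) \<Longrightarrow> case_prod join_trees (split_tree x) = x"
  by (cases x; cases "fst x") auto

lemma reduced_join_trees:
  "reduced (fst x) \<Longrightarrow> reduced (fst y) \<Longrightarrow> reduced (fst (join_trees x y))"
  by (cases x; cases y) auto

lemma reduced_split_tree:
  "reduced (fst x) \<Longrightarrow> reduced (fst (fst (split_tree x))) \<and> reduced (fst (snd (split_tree x)))"
  by (cases x; cases "fst x") auto

type_synonym forest = "nat \<Rightarrow> ftree \<times> bool"

definition join_first :: "forest \<Rightarrow> forest" where
  "join_first F = case_nat (join_trees (F 0) (F 1)) (\<lambda>i. F (Suc (Suc i)))"

definition split_first :: "forest \<Rightarrow> forest" where
  "split_first F =
     case_nat (fst (split_tree (F 0))) (case_nat (snd (split_tree (F 0))) (\<lambda>i. F (Suc i)))"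

fun apply_from :: "nat \<Rightarrow> (forest \<Rightarrow> forest) \<Rightarrow> forest \<Rightarrow> forest" where
  "apply_from 0 f F = f F"
| "apply_from (Suc j) f F = case_nat (F 0) (apply_from j f (\<lambda>i. F (Suc i)))"

lemma split_first_join_first: "split_first (join_first F) = F"
  by (auto simp: fun_eq_iff split_first_def join_first_def split_tree_join_trees split: nat.split)

lemma join_first_split_first: "reduced (fst (F 0)) \<Longrightarrow> join_first (split_first F) = F"
  using join_trees_split_tree[of "F 0"]
  by (auto simp: fun_eq_iff split_first_def join_first_def case_prod_beta split: nat.split)

lemma apply_from_cancel:
  assumes "\<And>X. P X \<Longrightarrow> g (f X) = X" and "P (\<lambda>i. F (i + j))"
  shows "apply_from j g (apply_from j f F) = F"
  using assms(2)
proof (induction j arbitrary: F)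
  case 0
  then show ?case using assms(1) by simp
next
  case (Suc j)
  have "apply_from j g (apply_from j f (\<lambda>i. F (Suc i))) = (\<lambda>i. F (Suc i))"
    using Suc.prems by (intro Suc.IH) (simp add: add.commute)
  then show ?case by (auto simp: fun_eq_iff split: nat.split)
qed

text \<open>The relation x_(n+1) x_(k+1) = x_(k+1) x_(n+2) for k < n.\<close>
lemma apply_from_join_first_commute:
  "k < n \<Longrightarrow> apply_from n join_first (apply_from k join_first F)
             = apply_from k join_first (apply_from (Suc n) join_first F)"
proof (induction k arbitrary: n F)
  case 0
  then obtain n' where "n = Suc n'" by (cases n) auto
  then show ?case by (auto simp: fun_eq_iff join_first_def split: nat.split)
next
  case (Suc k)
  then obtain n' where "n = Suc n'" and "k < n'" by (cases n) auto
  then show ?case using Suc.IH by (auto simp: fun_eq_iff split: nat.split)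
qed

text \<open>
  In a state (L, R, p), R i and L i are the i-th trees to the right and to the left of the
  pointer. The leaves of the row are numbered by the integers, p being the number of the
  first leaf of R 0, and the gap between leaves s and s + 1 is said to be at s.
\<close>

type_synonym state = "forest \<times> forest \<times> int"

fun move_right :: "state \<Rightarrow> state" where
  "move_right (L, R, p) = (case_nat (R 0) L, \<lambda>i. R (Suc i), p + int (leaves (fst (R 0))))"

fun move_left :: "state \<Rightarrow> state" where
  "move_left (L, R, p) = (\<lambda>i. L (Suc i), case_nat (L 0) R, p - int (leaves (fst (L 0))))"

lemma move_left_move_right [simp]: "move_left (move_right s) = s"
  by (cases s) (auto simp: fun_eq_iff split: nat.split)

lemma move_right_move_left [simp]: "move_right (move_left s) = s"
  by (cases s) (auto simp: fun_eq_iff split: nat.split)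

text \<open>Since x_0 moves the pointer past R 0, this makes x_(n+1) = x_0^-n x_1 x_0^n.\<close>

fun act :: "letter \<Rightarrow> state \<Rightarrow> state" where
  "act (Gen 0) s = move_right s"
| "act (Inv 0) s = move_left s"
| "act (Gen (Suc n)) (L, R, p) = (L, apply_from n join_first R, p)"
| "act (Inv (Suc n)) (L, R, p) = (L, apply_from n split_first R, p)"

definition act_word :: "letter list \<Rightarrow> state \<Rightarrow> state" where
  "act_word w = foldr act w"

lemma act_word_simps [simp]:
  "act_word [] s = s"
  "act_word (a # w) s = act a (act_word w s)"
  "act_word (u @ v) s = act_word u (act_word v s)"
  by (simp_all add: act_word_def)

definition valid_forest :: "forest \<Rightarrow> bool" where
  "valid_forest F \<longleftrightarrow> (\<forall>i. reduced (fst (F i))) \<and> (\<forall>\<^sub>F i in sequentially. F i = (Leaf, False))"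

fun valid_state :: "state \<Rightarrow> bool" where
  "valid_state (L, R, _) \<longleftrightarrow> valid_forest L \<and> valid_forest R"

lemma valid_forest_Suc: "valid_forest F \<Longrightarrow> valid_forest (\<lambda>i. F (Suc i))"
  using eventually_sequentially_Suc[of "\<lambda>i. F i = (Leaf, False)"] by (simp add: valid_forest_def)

lemma valid_forest_case_nat:
  "reduced (fst x) \<Longrightarrow> valid_forest F \<Longrightarrow> valid_forest (case_nat x F)"
  using eventually_sequentially_Suc[of "\<lambda>i. case_nat x F i = (Leaf, False)"]
  by (simp add: valid_forest_def split: nat.split)

lemma valid_forest_join_first: "valid_forest F \<Longrightarrow> valid_forest (join_first F)"
  unfolding join_first_def
  by (intro valid_forest_case_nat reduced_join_trees valid_forest_Suc)
    (auto simp: valid_forest_def)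

lemma valid_forest_split_first: "valid_forest F \<Longrightarrow> valid_forest (split_first F)"
  unfolding split_first_def
  using reduced_split_tree[of "F 0"]
  by (intro valid_forest_case_nat valid_forest_Suc) (auto simp: valid_forest_def)

lemma valid_forest_apply_from:
  "(\<And>X. valid_forest X \<Longrightarrow> valid_forest (f X)) \<Longrightarrow> valid_forest F
     \<Longrightarrow> valid_forest (apply_from j f F)"
proof (induction j arbitrary: F)
  case (Suc j)
  have "valid_forest (apply_from j f (\<lambda>i. F (Suc i)))"
    using Suc valid_forest_Suc by blast
  moreover have "reduced (fst (F 0))"
    using \<open>valid_forest F\<close> by (simp add: valid_forest_def)
  ultimately show ?case by (simp add: valid_forest_case_nat)
qed simp

lemma valid_state_act: "valid_state s \<Longrightarrow> valid_state (act a s)"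
proof (induction a s rule: act.induct)
  case (1 s)
  obtain L R p where "s = (L, R, p)" by (cases s)
  with 1 show ?case
    by (auto intro: valid_forest_case_nat valid_forest_Suc simp: valid_forest_def[of R])
next
  case (2 s)
  obtain L R p where "s = (L, R, p)" by (cases s)
  with 2 show ?case
    by (auto intro: valid_forest_case_nat valid_forest_Suc simp: valid_forest_def[of L])
qed (auto intro: valid_forest_apply_from valid_forest_join_first valid_forest_split_first)

lemma valid_state_act_word: "valid_state s \<Longrightarrow> valid_state (act_word w s)"
  by (induction w) (auto intro: valid_state_act)

lemma act_Gen_Inv: "valid_state s \<Longrightarrow> act (Gen n) (act (Inv n) s) = s"
proof (cases n)
  case (Suc k)
  assume "valid_state s"
  then obtain L R p where s: "s = (L, R, p)" and "reduced (fst (R k))"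
    by (cases s) (auto simp: valid_forest_def)
  then have "apply_from k join_first (apply_from k split_first R) = R"
    by (intro apply_from_cancel[where P = "\<lambda>X. reduced (fst (X 0))"] join_first_split_first) auto
  then show ?thesis using Suc s by simp
qed simp

lemma act_Inv_Gen: "act (Inv n) (act (Gen n) s) = s"
proof (cases n)
  case (Suc k)
  obtain L R p where s: "s = (L, R, p)" by (cases s)
  have "apply_from k split_first (apply_from k join_first R) = R"
    by (intro apply_from_cancel[where P = "\<lambda>_. True"] split_first_join_first) auto
  then show ?thesis using Suc s by simp
qed simp

lemma act_Gen_Gen: "k < n \<Longrightarrow> act (Gen n) (act (Gen k) s) = act (Gen k) (act (Gen (Suc n)) s)"
proof -
  assume "k < n"
  then obtain n' where n: "n = Suc n'" by (cases n) auto
  obtain L R p where s: "s = (L, R, p)" by (cases s)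
  show ?thesis
  proof (cases k)
    case 0
    then show ?thesis using n s by (auto simp: fun_eq_iff split: nat.split)
  next
    case (Suc k')
    then show ?thesis using n s \<open>k < n\<close> apply_from_join_first_commute[of k' n' R] by simp
  qed
qed

lemma act_word_F_eq: "F_eq u v \<Longrightarrow> valid_state s \<Longrightarrow> act_word u s = act_word v s"
proof (induction u v arbitrary: s rule: F_eq.induct)
  case (cancel1 u n v)
  then show ?case using act_Gen_Inv valid_state_act_word by simp
next
  case (cancel2 u n v)
  then show ?case using act_Inv_Gen by simp
next
  case (rel k n u v)
  then show ?case using act_Gen_Gen by simp
qed simp_all

section \<open>A weight bounding the length of words\<close>

definition trivial_from :: "nat \<Rightarrow> forest \<Rightarrow> bool" where
  "trivial_from N F \<longleftrightarrow> (\<forall>i\<ge>N. F i = (Leaf, False))"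

lemma trivial_from_mono: "trivial_from N F \<Longrightarrow> N \<le> M \<Longrightarrow> trivial_from M F"
  by (simp add: trivial_from_def)

lemma valid_forest_trivial_from: "valid_forest F \<Longrightarrow> \<exists>N. trivial_from N F"
  by (auto simp: valid_forest_def trivial_from_def eventually_sequentially)

definition nontrivial_within :: "nat \<Rightarrow> forest \<Rightarrow> bool" where
  "nontrivial_within n F \<longleftrightarrow> (\<exists>i<n. fst (F i) \<noteq> Leaf)"

lemma nontrivial_within_0 [simp]: "\<not> nontrivial_within 0 F"
  by (simp add: nontrivial_within_def)

lemma nontrivial_within_Suc:
  "nontrivial_within (Suc n) F \<longleftrightarrow> fst (F 0) \<noteq> Leaf \<or> nontrivial_within n (\<lambda>i. F (Suc i))"
  by (auto simp: nontrivial_within_def less_Suc_eq_0_disj)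

lemma nontrivial_within_stable:
  "trivial_from n F \<Longrightarrow> n \<le> m \<Longrightarrow> nontrivial_within m F \<longleftrightarrow> nontrivial_within n F"
  unfolding nontrivial_within_def trivial_from_def
  by (metis fst_conv not_less order.strict_trans2)

text \<open>
  The weights place trees on the numbered leaves: tree_weight t x weighs the inner gaps of t
  placed from leaf x on, right_weight_upto n F x the first n trees of F placed from leaf x on,
  and left_weight_upto n F x those placed to the left of leaf x. Trees beyond the n-th are
  taken to be trivial: their gaps weigh 1 between leaf x and leaf 0 and nothing elsewhere.
\<close>

definition gap_weight :: "int \<Rightarrow> bool \<Rightarrow> int" where
  "gap_weight s h = (if s < 0 then 1 else if h then 2 else 0)"

fun tree_weight :: "ftree \<Rightarrow> int \<Rightarrow> int" where
  "tree_weight Leaf x = 0"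
| "tree_weight (Node _ a b) x =
     tree_weight a x + tree_weight b (x + int (leaves a))
     + gap_weight (x + int (leaves a) - 1) (b \<noteq> Leaf)"

definition caret_weight :: "ftree \<times> bool \<Rightarrow> int" where
  "caret_weight x = int (carets (fst x)) - int (marked_carets (fst x)) - of_bool (snd x)"

fun right_weight_upto :: "nat \<Rightarrow> forest \<Rightarrow> int \<Rightarrow> int" where
  "right_weight_upto 0 F x = max 0 (- x)"
| "right_weight_upto (Suc n) F x =
     caret_weight (F 0) + tree_weight (fst (F 0)) x
     + gap_weight (x + int (leaves (fst (F 0))) - 1) (nontrivial_within n (\<lambda>i. F (Suc i)))
     + right_weight_upto n (\<lambda>i. F (Suc i)) (x + int (leaves (fst (F 0))))"

fun left_weight_upto :: "nat \<Rightarrow> forest \<Rightarrow> int \<Rightarrow> int" where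
  "left_weight_upto 0 F x = max 0 x"
| "left_weight_upto (Suc n) F x =
     caret_weight (F 0) + tree_weight (fst (F 0)) (x - int (leaves (fst (F 0))))
     + gap_weight (- x) (nontrivial_within (Suc n) F)
     + left_weight_upto n (\<lambda>i. F (Suc i)) (x - int (leaves (fst (F 0))))"

lemma right_weight_upto_Suc_trivial:
  "trivial_from n F \<Longrightarrow> right_weight_upto (Suc n) F x = right_weight_upto n F x"
proof (induction n arbitrary: F x)
  case 0
  then show ?case by (simp add: trivial_from_def caret_weight_def gap_weight_def)
next
  case (Suc n)
  then have "trivial_from n (\<lambda>i. F (Suc i))" by (simp add: trivial_from_def)
  with Suc.IH nontrivial_within_stable[of n _ "Suc n"] show ?case
    by (simp del: right_weight_upto.simps
        add: right_weight_upto.simps(2)[of "Suc n" F] right_weight_upto.simps(2)[of n F])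
qed

lemma left_weight_upto_Suc_trivial:
  "trivial_from n F \<Longrightarrow> left_weight_upto (Suc n) F x = left_weight_upto n F x"
proof (induction n arbitrary: F x)
  case 0
  then show ?case
    by (simp add: trivial_from_def caret_weight_def gap_weight_def nontrivial_within_Suc)
next
  case (Suc n)
  then have "trivial_from n (\<lambda>i. F (Suc i))" by (simp add: trivial_from_def)
  with Suc nontrivial_within_stable[of "Suc n" F "Suc (Suc n)"] show ?case
    by (simp del: left_weight_upto.simps
        add: left_weight_upto.simps(2)[of "Suc n" F] left_weight_upto.simps(2)[of n F])
qed

lemma right_weight_upto_stable:
  assumes "trivial_from n F" and "n \<le> m"
  shows "right_weight_upto m F x = right_weight_upto n F x"
  using assms(2)
proof (induction m rule: dec_induct)
  case (step m)
  then show ?case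
    using right_weight_upto_Suc_trivial trivial_from_mono[OF assms(1)] by simp
qed simp

lemma left_weight_upto_stable:
  assumes "trivial_from n F" and "n \<le> m"
  shows "left_weight_upto m F x = left_weight_upto n F x"
  using assms(2)
proof (induction m rule: dec_induct)
  case (step m)
  then show ?case
    using left_weight_upto_Suc_trivial trivial_from_mono[OF assms(1)] by simp
qed simp

definition right_weight :: "forest \<Rightarrow> int \<Rightarrow> int" where
  "right_weight F = right_weight_upto (SOME N. trivial_from N F) F"

definition left_weight :: "forest \<Rightarrow> int \<Rightarrow> int" where
  "left_weight F = left_weight_upto (SOME N. trivial_from N F) F"

lemma right_weight_eq: "trivial_from N F \<Longrightarrow> right_weight F x = right_weight_upto N F x"
  unfolding right_weight_def
  by (metis (mono_tags) nat_le_linear right_weight_upto_stable someI)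

lemma left_weight_eq: "trivial_from N F \<Longrightarrow> left_weight F x = left_weight_upto N F x"
  unfolding left_weight_def
  by (metis (mono_tags) nat_le_linear left_weight_upto_stable someI)

fun weight :: "state \<Rightarrow> int" where
  "weight (L, R, p) = left_weight L p + right_weight R p"

definition unit_steps :: "(int \<Rightarrow> int) \<Rightarrow> int set \<Rightarrow> bool" where
  "unit_steps f S \<longleftrightarrow> (\<forall>x. \<bar>f (x + 1) - f x\<bar> \<le> 1 \<and> (x \<notin> S \<longrightarrow> f (x + 1) = f x))"

lemma unit_steps_add:
  assumes "unit_steps f S" and "unit_steps g T" and "S \<inter> T = {}" and "S \<union> T \<subseteq> U"
  shows "unit_steps (\<lambda>x. f x + g x) U"
  unfolding unit_steps_def
proof (intro allI conjI impI)
  fix x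
  show "\<bar>f (x + 1) + g (x + 1) - (f x + g x)\<bar> \<le> 1"
    using assms by (cases "x \<in> S") (auto simp: unit_steps_def)
  assume "x \<notin> U"
  with assms(4) have "x \<notin> S" and "x \<notin> T" by auto
  with assms(1,2) show "f (x + 1) + g (x + 1) = f x + g x"
    by (simp add: unit_steps_def)
qed

lemma unit_steps_shift:
  assumes "unit_steps f S" and "\<And>x. x + c \<in> S \<Longrightarrow> x \<in> T" and "\<And>x. g x = f (x + c)"
  shows "unit_steps g T"
  using assms unfolding unit_steps_def by (metis add.commute add.left_commute)

lemma unit_steps_add_const [simp]: "unit_steps (\<lambda>x. c + f x) S \<longleftrightarrow> unit_steps f S"
  by (simp add: unit_steps_def)

lemma unit_steps_gap_weight: "unit_steps (\<lambda>x. gap_weight x h) {-1}"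
  by (simp add: unit_steps_def gap_weight_def)

lemma unit_steps_tree_weight: "unit_steps (tree_weight t) {- int (leaves t)<..<0}"
proof (induction t)
  case Leaf
  then show ?case by (simp add: unit_steps_def)
next
  case (Node m a b)
  define A where "A = int (leaves a)"
  define B where "B = int (leaves b)"
  have "A > 0" "B > 0" using leaves_pos unfolding A_def B_def by auto
  have "unit_steps (\<lambda>x. tree_weight b (x + A)) {- A - B<..< - A}"
    using Node.IH(2) by (rule unit_steps_shift) (auto simp: B_def)
  moreover have "unit_steps (\<lambda>x. gap_weight (x + A - 1) (b \<noteq> Leaf)) {- A}"
    using unit_steps_gap_weight
    by (rule unit_steps_shift[where c = "A - 1"]) (auto simp: algebra_simps)
  ultimately have "unit_steps (\<lambda>x. tree_weight b (x + A) + gap_weight (x + A - 1) (b \<noteq> Leaf))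
      {- A - B<..< - A + 1}"
    by (rule unit_steps_add) (use \<open>B > 0\<close> in auto)
  with Node.IH(1) have "unit_steps (\<lambda>x. tree_weight a x
      + (tree_weight b (x + A) + gap_weight (x + A - 1) (b \<noteq> Leaf))) {- A - B<..<0}"
    by (rule unit_steps_add) (use \<open>A > 0\<close> \<open>B > 0\<close> in \<open>auto simp: A_def\<close>)
  then show ?case by (simp add: A_def B_def add.assoc)
qed

lemma unit_steps_right_weight_upto: "unit_steps (right_weight_upto n F) {..<0}"
proof (induction n arbitrary: F)
  case 0
  then show ?case by (auto simp: unit_steps_def max_def)
next
  case (Suc n)
  define t where "t = fst (F 0)"
  define T where "T = int (leaves t)"
  define h where "h = nontrivial_within n (\<lambda>i. F (Suc i))"
  have "T > 0" using leaves_pos unfolding T_def by auto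
  have "unit_steps (\<lambda>x. gap_weight (x + T - 1) h) {- T}"
    using unit_steps_gap_weight
    by (rule unit_steps_shift[where c = "T - 1"]) (auto simp: algebra_simps)
  moreover have "unit_steps (\<lambda>x. right_weight_upto n (\<lambda>i. F (Suc i)) (x + T)) {..< - T}"
    using Suc.IH by (rule unit_steps_shift) auto
  ultimately have "unit_steps (\<lambda>x. gap_weight (x + T - 1) h
      + right_weight_upto n (\<lambda>i. F (Suc i)) (x + T)) {..< - T + 1}"
    by (rule unit_steps_add) auto
  with unit_steps_tree_weight[of t] have "unit_steps (\<lambda>x. tree_weight t x
      + (gap_weight (x + T - 1) h + right_weight_upto n (\<lambda>i. F (Suc i)) (x + T))) {..<0}"
    by (rule unit_steps_add) (use \<open>T > 0\<close> in \<open>auto simp: T_def\<close>)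
  then show ?case by (simp add: t_def T_def h_def add.assoc)
qed

lemma valid_state_trivial_from:
  "valid_state (L, R, p) \<Longrightarrow> \<exists>N. trivial_from N L \<and> trivial_from N R"
proof -
  assume "valid_state (L, R, p)"
  then have "valid_forest L" and "valid_forest R" by simp_all
  then obtain NL NR where "trivial_from NL L" and "trivial_from NR R"
    using valid_forest_trivial_from by blast
  then have "trivial_from (max NL NR) L \<and> trivial_from (max NL NR) R"
    by (auto elim: trivial_from_mono)
  then show ?thesis ..
qed

lemma weight_move_right:
  assumes "valid_state s"
  shows "\<bar>weight (move_right s) - weight s\<bar> \<le> 1"
proof -
  obtain L R p where s: "s = (L, R, p)" by (cases s)
  with assms obtain N where L: "trivial_from N L" and R: "trivial_from N R"
    using valid_state_trivial_from by blast
  define t where "t = fst (R 0)"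
  define q where "q = p + int (leaves t)"
  define hL where "hL = nontrivial_within (Suc N) (case_nat (R 0) L)"
  define hR where "hR = nontrivial_within N (\<lambda>i. R (Suc i))"
  have "trivial_from (Suc N) (case_nat (R 0) L)" and "trivial_from N (\<lambda>i. R (Suc i))"
    using L R by (auto simp: trivial_from_def split: nat.split)
  then have "weight (move_right s)
      = left_weight_upto (Suc N) (case_nat (R 0) L) q + right_weight_upto N (\<lambda>i. R (Suc i)) q"
    by (simp add: s left_weight_eq right_weight_eq q_def t_def)
  also have "\<dots> = caret_weight (R 0) + tree_weight t p + gap_weight (- q) hL
      + left_weight_upto N L p + right_weight_upto N (\<lambda>i. R (Suc i)) q"
    by (simp add: q_def t_def hL_def)
  finally have new: "weight (move_right s) = \<dots>" .
  have "trivial_from (Suc N) R"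
    using R by (rule trivial_from_mono) simp
  then have "weight s = left_weight_upto N L p + right_weight_upto (Suc N) R p"
    by (simp add: s left_weight_eq[OF L] right_weight_eq)
  also have "\<dots> = left_weight_upto N L p + caret_weight (R 0) + tree_weight t p
      + gap_weight (q - 1) hR + right_weight_upto N (\<lambda>i. R (Suc i)) q"
    by (simp add: q_def t_def hR_def)
  finally have old: "weight s = \<dots>" .
  txt \<open>Only the gap right of R 0 changes sides; one of its two weights is 1.\<close>
  show ?thesis
    unfolding new old by (simp add: gap_weight_def)
qed

lemma right_weight_upto_join_first:
  "\<bar>right_weight_upto (Suc n) (join_first F) x - right_weight_upto (Suc (Suc n)) F x\<bar> \<le> 1"
proof -
  obtain t0 m0 t1 m1 where F0: "F 0 = (t0, m0)" and F1: "F (Suc 0) = (t1, m1)"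
    by (metis prod.exhaust)
  define G where "G = (\<lambda>i. F (Suc (Suc i)))"
  define W where "W = right_weight_upto n G"
  define h where "h = nontrivial_within n G"
  define T0 where "T0 = int (leaves t0)"
  define T1 where "T1 = int (leaves t1)"
  have tail: "(\<lambda>i. join_first F (Suc i)) = G"
    by (simp add: join_first_def G_def)
  have old: "right_weight_upto (Suc (Suc n)) F x = caret_weight (t0, m0) + caret_weight (t1, m1)
      + tree_weight t0 x + tree_weight t1 (x + T0) + gap_weight (x + T0 - 1) (t1 \<noteq> Leaf \<or> h)
      + gap_weight (x + T0 + T1 - 1) h + W (x + T0 + T1)"
    by (simp add: F0 F1 nontrivial_within_Suc G_def W_def h_def T0_def T1_def)
  show ?thesis
  proof (cases "m0 \<and> t0 = Leaf \<and> t1 = Leaf")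
    case True
    txt \<open>The rest of the forest moves one leaf to the left.\<close>
    then have "join_first F 0 = (Leaf, m1)"
      by (simp add: join_first_def F0 F1)
    then have new: "right_weight_upto (Suc n) (join_first F) x
        = - of_bool m1 + gap_weight x h + W (x + 1)"
      by (simp add: tail W_def h_def caret_weight_def)
    have "\<bar>W (x + 1 + 1) - W (x + 1)\<bar> \<le> 1 \<and> (x + 1 \<notin> {..<0} \<longrightarrow> W (x + 1 + 1) = W (x + 1))"
      using unit_steps_right_weight_upto[of n G] unfolding W_def unit_steps_def by blast
    then show ?thesis
      using True unfolding new old by (auto simp: T0_def T1_def gap_weight_def caret_weight_def)
  next
    case False
    then have "join_first F 0 = (Node m0 t0 t1, m1)"
      by (auto simp: join_first_def F0 F1)
    then have new: "right_weight_upto (Suc n) (join_first F) x = caret_weight (t0, m0)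
        + caret_weight (t1, m1) + 1 + tree_weight t0 x + tree_weight t1 (x + T0)
        + gap_weight (x + T0 - 1) (t1 \<noteq> Leaf) + gap_weight (x + T0 + T1 - 1) h + W (x + T0 + T1)"
      by (simp add: tail W_def h_def T0_def T1_def caret_weight_def add.assoc)
    show ?thesis
      unfolding new old by (simp add: gap_weight_def)
  qed
qed

lemma weight_act_Gen_diff_le:
  assumes "valid_state s" and "n \<le> 1"
  shows "\<bar>weight (act (Gen n) s) - weight s\<bar> \<le> 1"
proof (cases n)
  case 0
  then show ?thesis using weight_move_right[OF assms(1)] by simp
next
  case (Suc k)
  obtain L R p where s: "s = (L, R, p)" by (cases s)
  with assms obtain N where L: "trivial_from N L" and R: "trivial_from N R"
    using valid_state_trivial_from by blast
  have "trivial_from (Suc N) (join_first R)" and "trivial_from (Suc (Suc N)) R"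
    using R by (auto simp: trivial_from_def join_first_def split: nat.split)
  then show ?thesis
    using Suc assms(2) right_weight_upto_join_first[of N R p]
    by (simp add: s left_weight_eq[OF L] right_weight_eq)
qed

lemma weight_act_le:
  assumes "valid_state s" and "a \<in> {Gen 0, Inv 0, Gen 1, Inv 1}"
  shows "weight (act a s) \<le> weight s + 1"
proof -
  obtain n where "n \<le> 1" and "a = Gen n \<or> a = Inv n"
    using assms(2) by auto
  from this(2) show ?thesis
  proof
    assume "a = Gen n"
    then show ?thesis
      using weight_act_Gen_diff_le[OF assms(1) \<open>n \<le> 1\<close>] by simp
  next
    assume "a = Inv n"
    then have "weight (act (Gen n) (act a s)) = weight s"
      using act_Gen_Inv[OF assms(1)] by simp
    moreover have "\<bar>weight (act (Gen n) (act a s)) - weight (act a s)\<bar> \<le> 1"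
      using assms(1) \<open>n \<le> 1\<close> by (intro weight_act_Gen_diff_le valid_state_act)
    ultimately show ?thesis by linarith
  qed
qed

lemma weight_act_word_le:
  "two_gen_word v \<Longrightarrow> valid_state s \<Longrightarrow> weight (act_word v s) \<le> weight s + int (length v)"
proof (induction v)
  case (Cons a v)
  then have "weight (act a (act_word v s)) \<le> weight (act_word v s) + 1"
    by (intro weight_act_le valid_state_act_word) (auto simp: two_gen_word_def)
  with Cons show ?case by (simp add: two_gen_word_def)
qed simp

definition base_state :: state where
  "base_state = (\<lambda>_. (Leaf, False), \<lambda>_. (Leaf, False), 0)"

lemma valid_base_state: "valid_state base_state"
  by (simp add: base_state_def valid_forest_def)

lemma weight_base_state: "weight base_state = 0"
  by (simp add: base_state_def left_weight_eq[of 0] right_weight_eq[of 0] trivial_from_def)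

section \<open>Strongly positive elements\<close>

lemma strongly_positive_word_simps [simp]:
  "strongly_positive_word []"
  "strongly_positive_word (a # w) \<longleftrightarrow> (\<exists>n. a = Gen (Suc n)) \<and> strongly_positive_word w"
  "strongly_positive_word (u @ w) \<longleftrightarrow> strongly_positive_word u \<and> strongly_positive_word w"
  by (auto simp: strongly_positive_word_def Suc_le_eq gr0_conv_Suc)

fun positive_forest :: "letter list \<Rightarrow> forest" where
  "positive_forest [] = (\<lambda>_. (Leaf, False))"
| "positive_forest (Gen (Suc n) # w) = apply_from n join_first (positive_forest w)"
| "positive_forest (_ # w) = positive_forest w"

lemma act_word_base_state:
  "strongly_positive_word p \<Longrightarrow> act_word p base_state = (\<lambda>_. (Leaf, False), positive_forest p, 0)"
  by (induction p) (auto simp: base_state_def)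

fun index_bound :: "letter list \<Rightarrow> nat" where
  "index_bound [] = 0"
| "index_bound (Gen n # w) = max (Suc n) (index_bound w)"
| "index_bound (Inv _ # w) = index_bound w"

lemma apply_from_join_first_beyond: "j < i \<Longrightarrow> apply_from j join_first F i = F (Suc i)"
proof (induction j arbitrary: F i)
  case 0
  then show ?case by (cases i) (auto simp: join_first_def)
next
  case (Suc j)
  then show ?case by (cases i) auto
qed

lemma trivial_from_positive_forest: "trivial_from (index_bound p) (positive_forest p)"
  unfolding trivial_from_def
proof (induction p rule: positive_forest.induct)
  case (2 n w)
  then show ?case by (auto simp: apply_from_join_first_beyond)
qed auto

lemma apply_from_pointwise:
  "(\<And>X. \<forall>i. P (X i) \<Longrightarrow> \<forall>i. P (f X i)) \<Longrightarrow> \<forall>i. P (F i) \<Longrightarrow> P (apply_from j f F i)"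
proof (induction j arbitrary: F i)
  case (Suc j)
  then show ?case by (cases i) auto
qed auto

definition unmarked :: "ftree \<times> bool \<Rightarrow> bool" where
  "unmarked x \<longleftrightarrow> \<not> snd x \<and> marked_carets (fst x) = 0"

lemma unmarked_join_trees: "unmarked x \<Longrightarrow> unmarked y \<Longrightarrow> unmarked (join_trees x y)"
  by (cases x; cases y) (auto simp: unmarked_def)

lemma unmarked_join_first: "\<forall>i. unmarked (F i) \<Longrightarrow> \<forall>i. unmarked (join_first F i)"
  by (auto simp: join_first_def unmarked_join_trees split: nat.split)

lemma unmarked_positive_forest: "unmarked (positive_forest p i)"
proof (induction p arbitrary: i rule: positive_forest.induct)
  case 1
  then show ?case by (simp add: unmarked_def)
next
  case (2 n w)
  then show ?case by (simp add: apply_from_pointwise unmarked_join_first)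
qed simp_all

text \<open>
  Read from right to left, tree_word t builds t on a leaf: it builds the left subtree, steps
  right with x_0 to build the right subtree, steps back and joins with x_1.
\<close>

fun tree_word :: "ftree \<Rightarrow> letter list" where
  "tree_word Leaf = []"
| "tree_word (Node _ a b) =
     Gen 1 # (if b = Leaf then [] else Inv 0 # tree_word b @ [Gen 0]) @ tree_word a"

fun forest_word :: "nat \<Rightarrow> forest \<Rightarrow> letter list" where
  "forest_word 0 F = []"
| "forest_word (Suc n) F =
     (if nontrivial_within n (\<lambda>i. F (Suc i))
      then Inv 0 # forest_word n (\<lambda>i. F (Suc i)) @ [Gen 0] else [])
     @ tree_word (fst (F 0))"

lemma set_tree_word: "set (tree_word t) \<subseteq> {Gen 0, Inv 0, Gen 1}"
  by (induction t) auto

lemma set_forest_word: "set (forest_word n F) \<subseteq> {Gen 0, Inv 0, Gen 1}"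
  by (induction n arbitrary: F) (use set_tree_word in auto)

lemma length_tree_word: "0 \<le> x \<Longrightarrow> int (length (tree_word t)) = int (carets t) + tree_weight t x"
proof (induction t arbitrary: x)
  case (Node m a b)
  have "int (length (tree_word a)) = int (carets a) + tree_weight a x"
    using Node.IH(1) Node.prems .
  moreover have "int (length (tree_word b)) = int (carets b) + tree_weight b (x + int (leaves a))"
    using Node.IH(2)[of "x + int (leaves a)"] Node.prems by simp
  moreover have "gap_weight (x + int (leaves a) - 1) (b \<noteq> Leaf) = (if b = Leaf then 0 else 2)"
    using Node.prems leaves_pos[of a] by (simp add: gap_weight_def)
  ultimately show ?case by (cases "b = Leaf") simp_all
qed simp

lemma forest_word_trivial: "\<not> nontrivial_within n F \<Longrightarrow> forest_word n F = []"
  by (induction n arbitrary: F) (auto simp: nontrivial_within_Suc)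

lemma right_weight_upto_unmarked:
  "0 \<le> x \<Longrightarrow> \<forall>i. unmarked (F i) \<Longrightarrow> right_weight_upto n F x = int (length (forest_word n F))"
proof (induction n arbitrary: F x)
  case (Suc n)
  have "unmarked (F 0)" using Suc.prems(2) by simp
  with Suc show ?case
    using leaves_pos[of "fst (F 0)"] length_tree_word[OF Suc.prems(1), of "fst (F 0)"]
    by (auto simp: unmarked_def caret_weight_def gap_weight_def forest_word_trivial)
qed simp

lemma left_weight_upto_trivial: "x \<le> 0 \<Longrightarrow> left_weight_upto n (\<lambda>_. (Leaf, False)) x = 0"
  by (induction n arbitrary: x) (auto simp: caret_weight_def gap_weight_def nontrivial_within_def)

declare F_eq.trans [trans]

lemma F_eq_append: "F_eq a b \<Longrightarrow> F_eq (u @ a @ v) (u @ b @ v)"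
proof (induction a b rule: F_eq.induct)
  case (cancel1 u' n v')
  show ?case using F_eq.cancel1[of "u @ u'" n "v' @ v"] by simp
next
  case (cancel2 u' n v')
  show ?case using F_eq.cancel2[of "u @ u'" n "v' @ v"] by simp
next
  case (rel k n u' v')
  show ?case using F_eq.rel[OF rel, of "u @ u'" "v' @ v"] by simp
qed (blast intro: F_eq.intros)+

lemma F_eq_append_left: "F_eq a b \<Longrightarrow> F_eq (u @ a) (u @ b)"
  using F_eq_append[of a b u "[]"] by simp

lemma F_eq_append_right: "F_eq a b \<Longrightarrow> F_eq (a @ v) (b @ v)"
  using F_eq_append[of a b "[]" v] by simp

fun shift_letter :: "letter \<Rightarrow> letter" where
  "shift_letter (Gen n) = Gen (Suc n)"
| "shift_letter (Inv n) = Inv (Suc n)"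

lemma F_eq_map_shift_letter: "F_eq a b \<Longrightarrow> F_eq (map shift_letter a) (map shift_letter b)"
proof (induction a b rule: F_eq.induct)
  case (cancel1 u n v)
  show ?case using F_eq.cancel1[of "map shift_letter u" "Suc n" "map shift_letter v"] by simp
next
  case (cancel2 u n v)
  show ?case using F_eq.cancel2[of "map shift_letter u" "Suc n" "map shift_letter v"] by simp
next
  case (rel k n u v)
  then show ?case using F_eq.rel[of "Suc k" "Suc n" "map shift_letter u" "map shift_letter v"]
    by simp
qed (blast intro: F_eq.intros)+

lemma strongly_positive_word_map_shift_letter:
  "strongly_positive_word w \<Longrightarrow> strongly_positive_word (map shift_letter w)"
  by (induction w) auto

lemma F_eq_conj_Gen_0:
  "strongly_positive_word w \<Longrightarrow> F_eq (Inv 0 # w @ [Gen 0]) (map shift_letter w)"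
proof (induction w)
  case Nil
  show ?case using F_eq.cancel2[of "[]" 0 "[]"] by simp
next
  case (Cons a w)
  then obtain i where a: "a = Gen (Suc i)" and w: "strongly_positive_word w" by auto
  have "F_eq (Inv 0 # Gen (Suc i) # w @ [Gen 0])
      (Inv 0 # Gen (Suc i) # Gen 0 # Inv 0 # w @ [Gen 0])"
    using F_eq.sym[OF F_eq.cancel1[of "[Inv 0, Gen (Suc i)]" 0 "w @ [Gen 0]"]] by simp
  also have "F_eq \<dots> (Inv 0 # Gen 0 # Gen (Suc (Suc i)) # Inv 0 # w @ [Gen 0])"
    using F_eq.rel[of 0 "Suc i" "[Inv 0]" "Inv 0 # w @ [Gen 0]"] by simp
  also have "F_eq \<dots> (Gen (Suc (Suc i)) # Inv 0 # w @ [Gen 0])"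
    using F_eq.cancel2[of "[]" 0 "Gen (Suc (Suc i)) # Inv 0 # w @ [Gen 0]"] by simp
  also have "F_eq \<dots> (Gen (Suc (Suc i)) # map shift_letter w)"
    using F_eq_append_left[OF Cons.IH[OF w], of "[Gen (Suc (Suc i))]"] by simp
  finally show ?case by (simp add: a)
qed

lemma F_eq_Gen_1_shift:
  "strongly_positive_word w
     \<Longrightarrow> F_eq (Gen 1 # map shift_letter (map shift_letter w)) (map shift_letter w @ [Gen 1])"
proof (induction w)
  case (Cons a w)
  then obtain i where a: "a = Gen (Suc i)" and w: "strongly_positive_word w" by auto
  have "F_eq (Gen 1 # Gen (Suc (Suc (Suc i))) # map shift_letter (map shift_letter w))
      (Gen (Suc (Suc i)) # Gen 1 # map shift_letter (map shift_letter w))"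
    using F_eq.sym[OF F_eq.rel[of 1 "Suc (Suc i)" "[]" "map shift_letter (map shift_letter w)"]]
    by simp
  also have "F_eq \<dots> (Gen (Suc (Suc i)) # map shift_letter w @ [Gen 1])"
    using F_eq_append_left[OF Cons.IH[OF w], of "[Gen (Suc (Suc i))]"] by simp
  finally show ?case by (simp add: a)
qed (simp add: F_eq.refl)

text \<open>
  The positive words replace the conjugation by x_0 with the shift x_i to x_(i+1), which
  agrees with it on strongly positive words.
\<close>

fun tree_positive_word :: "ftree \<Rightarrow> letter list" where
  "tree_positive_word Leaf = []"
| "tree_positive_word (Node _ a b) =
     Gen 1 # map shift_letter (tree_positive_word b) @ tree_positive_word a"

fun forest_positive_word :: "nat \<Rightarrow> forest \<Rightarrow> letter list" where
  "forest_positive_word 0 F = []"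
| "forest_positive_word (Suc n) F =
     map shift_letter (forest_positive_word n (\<lambda>i. F (Suc i))) @ tree_positive_word (fst (F 0))"

lemma strongly_positive_word_tree_positive_word: "strongly_positive_word (tree_positive_word t)"
  by (induction t) (auto simp: strongly_positive_word_def)

lemma strongly_positive_word_forest_positive_word:
  "strongly_positive_word (forest_positive_word n F)"
  by (induction n arbitrary: F)
    (simp_all add: strongly_positive_word_map_shift_letter
      strongly_positive_word_tree_positive_word)

lemma F_eq_tree_word: "F_eq (tree_word t) (tree_positive_word t)"
proof (induction t)
  case (Node m a b)
  have "F_eq (if b = Leaf then [] else Inv 0 # tree_word b @ [Gen 0])
      (map shift_letter (tree_positive_word b))"
  proof (cases "b = Leaf")
    case False
    have "F_eq (Inv 0 # tree_word b @ [Gen 0]) (Inv 0 # tree_positive_word b @ [Gen 0])"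
      using F_eq_append[OF Node.IH(2), of "[Inv 0]" "[Gen 0]"] by simp
    also have "F_eq \<dots> (map shift_letter (tree_positive_word b))"
      using F_eq_conj_Gen_0 strongly_positive_word_tree_positive_word by blast
    finally show ?thesis using False by simp
  qed (simp add: F_eq.refl)
  then have "F_eq (tree_word (Node m a b))
      (Gen 1 # map shift_letter (tree_positive_word b) @ tree_word a)"
    using F_eq_append[of _ _ "[Gen 1]" "tree_word a"] by simp
  also have "F_eq \<dots> (tree_positive_word (Node m a b))"
    using F_eq_append_left[OF Node.IH(1), of "Gen 1 # map shift_letter (tree_positive_word b)"]
    by simp
  finally show ?case .
qed (simp add: F_eq.refl)

lemma forest_positive_word_trivial: "\<not> nontrivial_within n F \<Longrightarrow> forest_positive_word n F = []"
  by (induction n arbitrary: F) (auto simp: nontrivial_within_Suc)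

lemma F_eq_forest_word: "F_eq (forest_word n F) (forest_positive_word n F)"
proof (induction n arbitrary: F)
  case (Suc n)
  let ?G = "\<lambda>i. F (Suc i)"
  have "F_eq (if nontrivial_within n ?G then Inv 0 # forest_word n ?G @ [Gen 0] else [])
      (map shift_letter (forest_positive_word n ?G))"
  proof (cases "nontrivial_within n ?G")
    case True
    have "F_eq (Inv 0 # forest_word n ?G @ [Gen 0]) (Inv 0 # forest_positive_word n ?G @ [Gen 0])"
      using F_eq_append[OF Suc.IH[of ?G], of "[Inv 0]" "[Gen 0]"] by simp
    also have "F_eq \<dots> (map shift_letter (forest_positive_word n ?G))"
      using F_eq_conj_Gen_0 strongly_positive_word_forest_positive_word by blast
    finally show ?thesis using True by simp
  qed (simp add: F_eq.refl forest_positive_word_trivial)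
  then have "F_eq (forest_word (Suc n) F)
      (map shift_letter (forest_positive_word n ?G) @ tree_word (fst (F 0)))"
    by (simp add: F_eq_append_right)
  also have "F_eq \<dots> (forest_positive_word (Suc n) F)"
    by (simp add: F_eq_append_left F_eq_tree_word)
  finally show ?case .
qed (simp add: F_eq.refl)

lemma forest_positive_word_Suc_Leaf:
  "fst (F m) = Leaf \<Longrightarrow> forest_positive_word (Suc m) F = forest_positive_word m F"
proof (induction m arbitrary: F)
  case (Suc m)
  then have "forest_positive_word (Suc m) (\<lambda>i. F (Suc i)) = forest_positive_word m (\<lambda>i. F (Suc i))"
    by simp
  then show ?case
    unfolding forest_positive_word.simps(2)[of "Suc m" F] forest_positive_word.simps(2)[of m F]
    by (simp only:)
qed simp

lemma F_eq_Gen_1_forest_positive_word: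
  assumes "trivial_from (Suc (Suc n)) F" and "\<not> snd (F 0)"
  shows "F_eq (Gen 1 # forest_positive_word (Suc (Suc n)) F)
    (forest_positive_word (Suc (Suc n)) (join_first F))"
proof -
  obtain t0 t1 m1 where F0: "F 0 = (t0, False)" and F1: "F (Suc 0) = (t1, m1)"
    using assms(2) by (cases "F 0", cases "F (Suc 0)") auto
  define G where "G = (\<lambda>i. F (Suc (Suc i)))"
  define v where "v = map shift_letter (tree_positive_word t1) @ tree_positive_word t0"
  have "fst (G n) = Leaf" using assms(1) by (simp add: G_def trivial_from_def)
  then have "forest_positive_word (Suc n) G = forest_positive_word n G"
    by (rule forest_positive_word_Suc_Leaf)
  then have joined: "forest_positive_word (Suc (Suc n)) (join_first F)
      = map shift_letter (forest_positive_word n G) @ Gen 1 # v"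
    by (simp add: F0 F1 join_first_def G_def v_def)
  have "F_eq (Gen 1 # forest_positive_word (Suc (Suc n)) F)
      ((Gen 1 # map shift_letter (map shift_letter (forest_positive_word n G))) @ v)"
    by (simp add: F0 F1 G_def v_def F_eq.refl)
  also have "F_eq \<dots> ((map shift_letter (forest_positive_word n G) @ [Gen 1]) @ v)"
    by (intro F_eq_append_right F_eq_Gen_1_shift strongly_positive_word_forest_positive_word)
  finally show ?thesis unfolding joined by simp
qed

lemma F_eq_Gen_forest_positive_word:
  "Suc (Suc k) \<le> n \<Longrightarrow> trivial_from n F \<Longrightarrow> \<forall>i. \<not> snd (F i)
     \<Longrightarrow> F_eq (Gen (Suc k) # forest_positive_word n F)
           (forest_positive_word n (apply_from k join_first F))"
proof (induction k arbitrary: n F)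
  case 0
  then obtain n' where "n = Suc (Suc n')" by (cases n; cases "n - 1") auto
  with 0 show ?case using F_eq_Gen_1_forest_positive_word by simp
next
  case (Suc k)
  then obtain n' where n: "n = Suc n'" by (cases n) auto
  let ?G = "\<lambda>i. F (Suc i)" and ?t = "tree_positive_word (fst (F 0))"
  have "F_eq (Gen (Suc k) # forest_positive_word n' ?G)
      (forest_positive_word n' (apply_from k join_first ?G))"
    using Suc.prems n by (intro Suc.IH) (auto simp: trivial_from_def)
  then have "F_eq (map shift_letter (Gen (Suc k) # forest_positive_word n' ?G) @ ?t)
      (map shift_letter (forest_positive_word n' (apply_from k join_first ?G)) @ ?t)"
    by (intro F_eq_append_right F_eq_map_shift_letter)
  then show ?case by (simp add: n)
qed

lemma F_eq_positive_forest:
  "strongly_positive_word p \<Longrightarrow> index_bound p \<le> n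
     \<Longrightarrow> F_eq p (forest_positive_word n (positive_forest p))"
proof (induction p)
  case Nil
  then show ?case by (simp add: F_eq.refl forest_positive_word_trivial nontrivial_within_def)
next
  case (Cons a w)
  then obtain k where a: "a = Gen (Suc k)" and w: "strongly_positive_word w" by auto
  have "F_eq (a # w) (a # forest_positive_word n (positive_forest w))"
    using F_eq_append_left[OF Cons.IH[OF w], of "[a]"] Cons.prems(2) a by simp
  also have "F_eq \<dots> (forest_positive_word n (apply_from k join_first (positive_forest w)))"
    unfolding a
  proof (rule F_eq_Gen_forest_positive_word)
    show "Suc (Suc k) \<le> n" using Cons.prems(2) a by simp
    show "trivial_from n (positive_forest w)"
      using Cons.prems(2) a by (intro trivial_from_mono[OF trivial_from_positive_forest]) simp
    show "\<forall>i. \<not> snd (positive_forest w i)"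
      using unmarked_positive_forest by (simp add: unmarked_def)
  qed
  finally show ?case by (simp add: a)
qed

theorem lemma4p1p1:
  assumes "strongly_positive_word p"
  shows "\<exists>w. two_gen_word w \<and> F_eq w p
           \<and> (\<forall>v. two_gen_word v \<and> F_eq v p \<longrightarrow> length w \<le> length v)
           \<and> Inv 1 \<notin> set w"
proof -
  define N where "N = index_bound p"
  define w where "w = forest_word N (positive_forest p)"
  have "two_gen_word w" and "Inv 1 \<notin> set w"
    using set_forest_word[of N] by (auto simp: two_gen_word_def w_def)
  moreover have "F_eq w p"
    using F_eq_forest_word F_eq.sym[OF F_eq_positive_forest[OF assms]]
    unfolding w_def N_def by (blast intro: F_eq.trans)
  moreover have "weight (act_word p base_state) = int (length w)"
    using trivial_from_positive_forest[of p] unmarked_positive_forest[of p]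
    by (simp add: act_word_base_state[OF assms] left_weight_eq[of 0] right_weight_eq
        left_weight_upto_trivial right_weight_upto_unmarked trivial_from_def w_def N_def)
  moreover have "weight (act_word p base_state) \<le> int (length v)"
    if "two_gen_word v" and "F_eq v p" for v
    using weight_act_word_le[OF that(1) valid_base_state] weight_base_state
      act_word_F_eq[OF that(2) valid_base_state] by simp
  ultimately show ?thesis by force
qed

end
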